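(* Let $S_{r,N}$ be a nontrivial atomic exponential Puiseux semiring. Then $$\{|\mathsf{n}(r)^{\delta_n}-\mathsf{d}(r)^{\delta_n}|: n\in\mathbb{N}\}\subseteq\Delta(S_{r,N})\subseteq\{k\in\mathbb{Z}: |\mathsf{n}(r)-\mathsf{d}(r)|\le k\le|\mathsf{n}(r)^{\delta_0}-\mathsf{d}(r)^{\delta_0}|\}.$$
   Context: $\mathbb{N}=\{0,1,2,\dots\}$. A numerical monoid $N$ is an additive submonoid of $\mathbb{N}$ with finite complement in $\mathbb{N}$; let $s_0<s_1<\cdots$ be its elements and $\delta_n=s_{n+1}-s_n$. For $r\in\mathbb{Q}_{>0}$ write $r=\mathsf{n}(r)/\mathsf{d}(r)$ in lowest terms. The exponential Puiseux semiring $S_{r,N}$ is the additive submonoid of $\mathbb{Q}_{\ge0}$ generated by $\{r^k:k\in N\}$; it is nontrivial if $r\notin\mathbb{N}$, and then atomic iff $\mathsf{n}(r)>1$. For an atomic monoid $M$ and $x\in M$ with set of lengths $\mathsf{L}(x)$, a positive integer $d$ is a distance of $x$ if $\mathsf{L}(x)\cap\{l,\dots,l+d\}=\{l,l+d\}$ for some $l\in\mathsf{L}(x)$; $\Delta(x)$ is the set of distances of $x$ and $\Delta(M)=\bigcup_{x\in M}\Delta(x)$. *)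

theory Defs
  imports Complex_Main "HOL-Library.Multiset" "HOL-Library.Infinite_Set"
begin

definition numerical_monoid :: "nat set \<Rightarrow> bool" where
  "numerical_monoid N \<longleftrightarrow> 0 \<in> N \<and> (\<forall>a\<in>N. \<forall>b\<in>N. a + b \<in> N) \<and> finite (UNIV - N)"

text \<open>s_n: the n-th element of N in increasing order; delta_n = s_(n+1) - s_n.\<close>
definition nm_elem :: "nat set \<Rightarrow> nat \<Rightarrow> nat" where
  "nm_elem N n = enumerate N n"

definition nm_gap :: "nat set \<Rightarrow> nat \<Rightarrow> nat" where
  "nm_gap N n = nm_elem N (Suc n) - nm_elem N n"

definition rnum :: "rat \<Rightarrow> int" where "rnum r = fst (quotient_of r)"
definition rden :: "rat \<Rightarrow> int" where "rden r = snd (quotient_of r)"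

inductive_set gen_monoid :: "rat set \<Rightarrow> rat set" for A where
  zero: "0 \<in> gen_monoid A"
| add: "a \<in> A \<Longrightarrow> x \<in> gen_monoid A \<Longrightarrow> a + x \<in> gen_monoid A"

definition exp_puiseux :: "rat \<Rightarrow> nat set \<Rightarrow> rat set" where
  "exp_puiseux r N = gen_monoid {r ^ k | k. k \<in> N}"

text \<open>Atoms of a submonoid M of (Q_{>=0},+): its only unit is 0.\<close>
definition atoms :: "rat set \<Rightarrow> rat set" where
  "atoms M = {a \<in> M. a \<noteq> 0 \<and> (\<forall>x\<in>M. \<forall>y\<in>M. a = x + y \<longrightarrow> x = 0 \<or> y = 0)}"

definition factorizations :: "rat set \<Rightarrow> rat \<Rightarrow> rat multiset set" where
  "factorizations M x = {z. set_mset z \<subseteq> atoms M \<and> sum_mset z = x}"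

definition atomic_monoid :: "rat set \<Rightarrow> bool" where
  "atomic_monoid M \<longleftrightarrow> (\<forall>x\<in>M. x \<noteq> 0 \<longrightarrow> factorizations M x \<noteq> {})"

definition lengths :: "rat set \<Rightarrow> rat \<Rightarrow> nat set" where
  "lengths M x = size ` factorizations M x"

definition delta_elem :: "rat set \<Rightarrow> rat \<Rightarrow> nat set" where
  "delta_elem M x = {d. d > 0 \<and> (\<exists>l\<in>lengths M x. lengths M x \<inter> {l..l+d} = {l, l+d})}"

definition delta_set :: "rat set \<Rightarrow> nat set" where
  "delta_set M = (\<Union>x\<in>M. delta_elem M x)"

end

theory Submission
  imports Defs
begin

(* Write r = a / b in lowest terms; atomicity gives a >= 2 and r not in Nat gives b >= 2.
  The atoms are the powers r ^ k with k in N, so a factorization of x is a multiset Z of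
  exponents with sum of r ^ k over Z equal to x. Clearing denominators, two factorizations of the
  same element give an integer relation sum_j (c_j - c'_j) * a ^ j * b ^ (D - j) = 0 between
  their multiplicities. As a = b modulo a - b, this makes a - b divide every difference of
  lengths, which is the lower bound. It also makes a ^ t divide c_m - c'_m at the least exponent
  m where the two differ, as long as they agree on all exponents below m + t.

  For the other two bounds let a > b; the case a < b is the same after replacing r by 1 / r and
  the exponents k by -k, which is why exponents are taken in an arbitrary set I of integers whose
  consecutive elements are at most delta_0 apart. Trading a ^ g copies of r ^ j for b ^ g copies
  of r ^ (j + g), for consecutive exponents j < j + g, shortens a factorization by
  a ^ g - b ^ g <= a ^ delta_0 - b ^ delta_0. By the divisibility property a factorization that
  admits no trade is unique, so trading down from a long factorization crosses every gap between
  lengths in steps of at most a ^ delta_0 - b ^ delta_0. Finally a ^ delta_n * r ^ s_n has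
  factorizations of lengths a ^ delta_n and b ^ delta_n and none strictly in between. *)

section \<open>Multiplicities and weighted sums\<close>

lemma sum_mset_eq_sum_count:
  fixes f :: "'a \<Rightarrow> 'b::comm_semiring_1"
  assumes "finite A" "set_mset M \<subseteq> A"
  shows "(\<Sum>x\<in>#M. f x) = (\<Sum>x\<in>A. of_nat (count M x) * f x)"
  using assms(2)
proof (induction M)
  case empty
  then show ?case by simp
next
  case (add y M)
  have "(\<Sum>x\<in>A. of_nat (count (add_mset y M) x) * f x)
      = (\<Sum>x\<in>A. of_nat (count M x) * f x + (if x = y then f x else 0))"
    by (intro sum.cong) (auto simp: algebra_simps)
  also have "\<dots> = (\<Sum>x\<in>A. of_nat (count M x) * f x) + f y"
    using add.prems assms(1) by (simp add: sum.distrib)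
  finally show ?case
    using add by (simp add: add.commute)
qed

lemma sum_mset_eq_sum_interval:
  fixes f :: "int \<Rightarrow> 'b::comm_semiring_1"
  assumes "set_mset Z \<subseteq> {L..L + int D}"
  shows "(\<Sum>k\<in>#Z. f k) = (\<Sum>i\<le>D. of_nat (count Z (L + int i)) * f (L + int i))"
proof -
  have window: "{L..L + int D} = (\<lambda>i. L + int i) ` {..D}"
  proof (intro equalityI subsetI)
    fix k assume "k \<in> {L..L + int D}"
    then show "k \<in> (\<lambda>i. L + int i) ` {..D}"
      by (intro image_eqI[of _ _ "nat (k - L)"]) auto
  qed auto
  have "(\<Sum>k\<in>#Z. f k) = (\<Sum>k\<in>{L..L + int D}. of_nat (count Z k) * f k)"
    using assms by (intro sum_mset_eq_sum_count) auto
  also have "\<dots> = (\<Sum>i\<le>D. of_nat (count Z (L + int i)) * f (L + int i))"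
    unfolding window by (subst sum.reindex) (auto simp: inj_on_def)
  finally show ?thesis .
qed

lemma finite_int_subset_interval:
  assumes "finite (S :: int set)"
  obtains L D where "S \<subseteq> {L..L + int D}"
proof
  let ?n = "\<Sum>x\<in>S. \<bar>x\<bar>"
  have "\<bar>x\<bar> \<le> ?n" if "x \<in> S" for x
    using assms that by (intro member_le_sum) auto
  then show "S \<subseteq> {- ?n..- ?n + int (nat (2 * ?n))}"
    by force
qed

lemma least_count_difference:
  fixes Z Z' :: "'a::linorder multiset"
  assumes "Z \<noteq> Z'"
  obtains m where "count Z m \<noteq> count Z' m" "\<And>j. j < m \<Longrightarrow> count Z j = count Z' j"
proof -
  define D where "D = {j. count Z j \<noteq> count Z' j}"
  have "D \<subseteq> set_mset Z \<union> set_mset Z'"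
  proof
    fix j assume "j \<in> D"
    then show "j \<in> set_mset Z \<union> set_mset Z'"
      by (cases "j \<in># Z"; cases "j \<in># Z'") (simp_all add: D_def not_in_iff)
  qed
  then have "finite D"
    by (rule finite_subset) simp
  moreover have "D \<noteq> {}"
  proof
    assume "D = {}"
    then have "Z = Z'"
      by (intro multiset_eqI) (simp add: D_def)
    then show False
      using assms by simp
  qed
  ultimately have "Min D \<in> D"
    by (rule Min_in)
  have below: "count Z j = count Z' j" if "j < Min D" for j
  proof (rule ccontr)
    assume "count Z j \<noteq> count Z' j"
    then have "Min D \<le> j"
      using \<open>finite D\<close> by (intro Min_le) (simp_all add: D_def)
    then show False
      using that by simp
  qed
  show ?thesis
  proof (rule that)
    show "count Z (Min D) \<noteq> count Z' (Min D)"
      using \<open>Min D \<in> D\<close> by (simp add: D_def)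
  qed (rule below)
qed

lemma count_eq_0_if_less_Min_mset: "j < Min (set_mset Z) \<Longrightarrow> count Z j = 0"
  by (auto simp: count_eq_zero_iff dest: Min_le[rotated])

lemma weighted_sum_zero_dvd_coeff:
  fixes a b :: int and e :: "nat \<Rightarrow> int"
  assumes sum: "(\<Sum>i\<le>D. e i * a ^ i * b ^ (D - i)) = 0"
    and "coprime a b" "a \<noteq> 0" "m \<le> D"
    and vanish: "\<And>i. i \<le> D \<Longrightarrow> i \<noteq> m \<Longrightarrow> i < m + t \<Longrightarrow> e i = 0"
  shows "a ^ t dvd e m"
proof -
  have split: "(\<Sum>i\<le>D. e i * a ^ i * b ^ (D - i))
      = e m * a ^ m * b ^ (D - m) + (\<Sum>i\<in>{..D} - {m}. e i * a ^ i * b ^ (D - i))"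
    using \<open>m \<le> D\<close> by (subst sum.remove[of _ m]) auto
  have "a ^ (m + t) dvd (\<Sum>i\<in>{..D} - {m}. e i * a ^ i * b ^ (D - i))"
  proof (rule dvd_sum)
    fix i assume "i \<in> {..D} - {m}"
    then show "a ^ (m + t) dvd e i * a ^ i * b ^ (D - i)"
      using vanish[of i] by (cases "i < m + t") (auto simp: le_imp_power_dvd)
  qed
  then have "a ^ m * a ^ t dvd a ^ m * (e m * b ^ (D - m))"
    using sum split by (simp add: power_add dvd_minus_iff ac_simps flip: eq_neg_iff_add_eq_0)
  then have "a ^ t dvd e m * b ^ (D - m)"
    using \<open>a \<noteq> 0\<close> by simp
  then show ?thesis
    using \<open>coprime a b\<close> by (simp add: coprime_dvd_mult_left_iff)
qed

lemma weighted_sum_zero_diff_dvd: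
  fixes a b :: int and e :: "nat \<Rightarrow> int"
  assumes sum: "(\<Sum>i\<le>D. e i * a ^ i * b ^ (D - i)) = 0" and "coprime a b"
  shows "a - b dvd (\<Sum>i\<le>D. e i)"
proof -
  have "b ^ D * (\<Sum>i\<le>D. e i) = (\<Sum>i\<le>D. e i * a ^ i * b ^ (D - i)) - (\<Sum>i\<le>D. e i * b ^ (D - i) * (a ^ i - b ^ i))"
    by (simp add: sum_distrib_left algebra_simps flip: sum_subtractf power_add)
  also have "a - b dvd \<dots>"
    unfolding sum by (intro dvd_diff dvd_sum) (auto simp: power_diff_sumr2)
  finally have "a - b dvd b ^ D * (\<Sum>i\<le>D. e i)" .
  moreover have "coprime (a - b) b"
    using \<open>coprime a b\<close> by (simp add: coprime_iff_gcd_eq_1 gcd_diff1)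
  then have "coprime (a - b) (b ^ D)"
    by simp
  ultimately show ?thesis
    using coprime_dvd_mult_right_iff by blast
qed

lemma eq_if_dvd_diff_less:
  assumes "int d dvd int x - int y" "x < d" "y < d"
  shows "x = y"
proof (rule ccontr)
  assume "x \<noteq> y"
  then have "int d \<le> \<bar>int x - int y\<bar>"
    using dvd_imp_le_int[OF _ assms(1)] by simp
  then show False
    using assms(2,3) by linarith
qed

lemma power_diff_mono:
  fixes a b :: nat
  assumes "0 < b" "b \<le> a" "g \<le> G"
  shows "a ^ g - b ^ g \<le> a ^ G - b ^ G"
  using assms(3)
proof (induction G)
  case (Suc G)
  show ?case
  proof (cases "g = Suc G")
    case False
    have "a ^ G - b ^ G \<le> a ^ Suc G - b ^ Suc G"
    proof -
      have "b ^ G \<le> a ^ G"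
        using assms(2) by (rule power_mono) simp
      moreover have "(b - 1) * b ^ G \<le> (a - 1) * a ^ G"
        using assms(2) \<open>b ^ G \<le> a ^ G\<close> by (intro mult_mono) auto
      moreover have "b ^ Suc G = b ^ G + (b - 1) * b ^ G" "a ^ Suc G = a ^ G + (a - 1) * a ^ G"
        using assms(1,2) by (simp_all add: algebra_simps)
      ultimately show ?thesis
        by linarith
    qed
    then show ?thesis
      using Suc False by simp
  qed simp
qed simp

section \<open>Sums of integer powers of a rational\<close>

definition sum_powi :: "rat \<Rightarrow> int multiset \<Rightarrow> rat" where
  "sum_powi q Z = (\<Sum>k\<in>#Z. q powi k)"

definition power_reps :: "rat \<Rightarrow> int set \<Rightarrow> rat \<Rightarrow> int multiset set" where
  "power_reps q I x = {Z. set_mset Z \<subseteq> I \<and> sum_powi q Z = x}"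

lemma sum_powi_empty [simp]: "sum_powi q {#} = 0"
  and sum_powi_add_mset [simp]: "sum_powi q (add_mset k Z) = q powi k + sum_powi q Z"
  and sum_powi_union [simp]: "sum_powi q (Z + Z') = sum_powi q Z + sum_powi q Z'"
  and sum_powi_replicate_mset [simp]: "sum_powi q (replicate_mset n k) = of_nat n * q powi k"
  by (simp_all add: sum_powi_def)

lemma sum_powi_nonneg: "0 < q \<Longrightarrow> 0 \<le> sum_powi q Z"
  by (induction Z) auto

lemma sum_powi_pos: "0 < q \<Longrightarrow> Z \<noteq> {#} \<Longrightarrow> 0 < sum_powi q Z"
  by (cases Z) (auto intro!: add_pos_nonneg sum_powi_nonneg)

lemma sum_powi_eq_0_iff: "0 < q \<Longrightarrow> sum_powi q Z = 0 \<longleftrightarrow> Z = {#}"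
  using sum_powi_pos[of q Z] by fastforce

lemma sum_powi_ge_size:
  assumes "\<And>k. k \<in># Z \<Longrightarrow> c \<le> q powi k"
  shows "of_nat (size Z) * c \<le> sum_powi q Z"
  using assms
proof (induction Z)
  case (add k Z)
  have "of_nat (size (add_mset k Z)) * c = c + of_nat (size Z) * c"
    by (simp add: algebra_simps)
  also have "\<dots> \<le> q powi k + sum_powi q Z"
    using add by (intro add_mono) auto
  finally show ?case
    by simp
qed simp

lemma sum_powi_ge_count: "0 < q \<Longrightarrow> of_nat (count Z k) * q powi k \<le> sum_powi q Z"
  by (induction Z) (auto simp: distrib_right add_increasing sum_powi_nonneg)

lemma sum_powi_exchange:
  assumes "p \<le> count Z j" "of_nat p * q powi j = of_nat p' * q powi j'"
  shows "sum_powi q (Z - replicate_mset p j + replicate_mset p' j') = sum_powi q Z"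
    and "size (Z - replicate_mset p j + replicate_mset p' j') + p = size Z + p'"
proof -
  have "replicate_mset p j \<subseteq># Z"
    using assms(1) by (simp add: count_le_replicate_mset_subset_eq)
  then obtain Z0 where Z0: "Z = replicate_mset p j + Z0"
    by (auto simp: mset_subset_eq_exists_conv)
  show "sum_powi q (Z - replicate_mset p j + replicate_mset p' j') = sum_powi q Z"
    using assms(2) unfolding Z0 by simp
  show "size (Z - replicate_mset p j + replicate_mset p' j') + p = size Z + p'"
    unfolding Z0 by simp
qed

lemma power_int_exchange:
  assumes "0 < a" "0 < b"
  shows "of_nat a ^ g * (of_nat a / of_nat b :: rat) powi j = of_nat b ^ g * (of_nat a / of_nat b) powi (j + int g)"
proof -
  have "(of_nat a / of_nat b :: rat) powi (j + int g) = (of_nat a / of_nat b) powi j * (of_nat a / of_nat b) ^ g"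
    using assms by (simp add: power_int_add)
  then show ?thesis
    using assms by (simp add: power_divide)
qed

lemma sum_powi_mirror: "sum_powi (inverse q) (image_mset uminus Z) = sum_powi q Z"
  by (simp add: sum_powi_def multiset.map_comp comp_def power_int_minus power_int_inverse)

lemma power_reps_mirror:
  "Z \<in> power_reps q I x \<Longrightarrow> image_mset uminus Z \<in> power_reps (inverse q) (uminus ` I) x"
  by (auto simp: power_reps_def sum_powi_mirror)

lemma size_power_reps_mirror:
  "size ` power_reps (inverse q) (uminus ` I) x = size ` power_reps q I x"
proof (intro equalityI image_subsetI)
  fix Z assume "Z \<in> power_reps (inverse q) (uminus ` I) x"
  then have "image_mset uminus Z \<in> power_reps q I x"
    using power_reps_mirror[of Z "inverse q" "uminus ` I"] by (simp add: image_image)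
  then show "size Z \<in> size ` power_reps q I x"
    by (rule rev_image_eqI) simp
next
  fix Z assume "Z \<in> power_reps q I x"
  then have "image_mset uminus Z \<in> power_reps (inverse q) (uminus ` I) x"
    by (rule power_reps_mirror)
  then show "size Z \<in> size ` power_reps (inverse q) (uminus ` I) x"
    by (rule rev_image_eqI) simp
qed

lemma sum_powi_clear_denominators:
  assumes "0 < a" "0 < b" "set_mset Z \<subseteq> {L..L + int D}"
  shows "sum_powi (of_nat a / of_nat b) Z * (of_nat a / of_nat b) powi (- L) * of_nat b ^ D
       = of_int (\<Sum>i\<le>D. int (count Z (L + int i)) * int a ^ i * int b ^ (D - i))"
proof -
  let ?q = "of_nat a / of_nat b :: rat"
  have scaled_term: "?q powi (L + int i) * ?q powi (- L) * of_nat b ^ D = of_nat a ^ i * of_nat b ^ (D - i)"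
    if "i \<le> D" for i
  proof -
    have "?q powi (L + int i) * ?q powi (- L) = ?q ^ i"
      using assms(1,2) by (simp flip: power_int_add)
    moreover have "(of_nat b :: rat) ^ D = of_nat b ^ i * of_nat b ^ (D - i)"
      using that by (simp flip: power_add)
    ultimately show ?thesis
      using assms(2) by (simp add: power_divide)
  qed
  have "sum_powi ?q Z = (\<Sum>i\<le>D. of_nat (count Z (L + int i)) * ?q powi (L + int i))"
    unfolding sum_powi_def using assms(3) by (rule sum_mset_eq_sum_interval)
  then have "sum_powi ?q Z * ?q powi (- L) * of_nat b ^ D
      = (\<Sum>i\<le>D. of_nat (count Z (L + int i)) * (?q powi (L + int i) * ?q powi (- L) * of_nat b ^ D))"
    by (simp add: sum_distrib_right mult.assoc)
  also have "\<dots> = (\<Sum>i\<le>D. of_nat (count Z (L + int i)) * (of_nat a ^ i * of_nat b ^ (D - i)))"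
    by (intro sum.cong) (simp_all add: scaled_term)
  finally show ?thesis
    by (simp add: mult.assoc)
qed

lemma sum_powi_eq_imp_weighted_sum:
  assumes "sum_powi (of_nat a / of_nat b) Z = sum_powi (of_nat a / of_nat b) Z'" "0 < a" "0 < b"
    and "set_mset Z \<subseteq> {L..L + int D}" "set_mset Z' \<subseteq> {L..L + int D}"
  shows "(\<Sum>i\<le>D. (int (count Z (L + int i)) - int (count Z' (L + int i))) * int a ^ i * int b ^ (D - i)) = 0"
proof -
  have "(of_int (\<Sum>i\<le>D. int (count Z (L + int i)) * int a ^ i * int b ^ (D - i)) :: rat)
      = of_int (\<Sum>i\<le>D. int (count Z' (L + int i)) * int a ^ i * int b ^ (D - i))"
    using sum_powi_clear_denominators[OF assms(2,3,4)] sum_powi_clear_denominators[OF assms(2,3,5)] assms(1) by simp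
  then show ?thesis
    unfolding of_int_eq_iff by (simp add: sum_subtractf left_diff_distrib)
qed

lemma sum_powi_eq_count_dvd:
  assumes eq: "sum_powi (of_nat a / of_nat b) Z = sum_powi (of_nat a / of_nat b) Z'"
    and "coprime a b" "0 < a" "0 < b"
    and agree: "\<And>j. j \<noteq> m \<Longrightarrow> j < m + int t \<Longrightarrow> count Z j = count Z' j"
  shows "int a ^ t dvd int (count Z m) - int (count Z' m)"
proof -
  obtain L D where window: "set_mset Z \<union> set_mset Z' \<union> {m} \<subseteq> {L..L + int D}"
    using finite_int_subset_interval[of "set_mset Z \<union> set_mset Z' \<union> {m}"] by auto
  define e where "e i = int (count Z (L + int i)) - int (count Z' (L + int i))" for i
  have "(\<Sum>i\<le>D. e i * int a ^ i * int b ^ (D - i)) = 0"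
    unfolding e_def using window by (intro sum_powi_eq_imp_weighted_sum[OF eq \<open>0 < a\<close> \<open>0 < b\<close>]) auto
  then have "int a ^ t dvd e (nat (m - L))"
  proof (rule weighted_sum_zero_dvd_coeff)
    show "coprime (int a) (int b)" "int a \<noteq> 0" "nat (m - L) \<le> D"
      using assms window by auto
    fix i assume "i \<le> D" "i \<noteq> nat (m - L)" "i < nat (m - L) + t"
    then show "e i = 0"
      using window agree[of "L + int i"] by (auto simp: e_def)
  qed
  then show ?thesis
    using window by (simp add: e_def)
qed

lemma sum_powi_eq_count_dvd_gap:
  assumes "sum_powi (of_nat a / of_nat b) Z = sum_powi (of_nat a / of_nat b) Z'"
    and "set_mset Z \<subseteq> I" "set_mset Z' \<subseteq> I"
    and "\<And>j. j < m \<Longrightarrow> count Z j = count Z' j"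
    and "\<And>j. m < j \<Longrightarrow> j < m + int t \<Longrightarrow> j \<notin> I"
    and "coprime a b" "0 < a" "0 < b"
  shows "int a ^ t dvd int (count Z m) - int (count Z' m)"
proof (rule sum_powi_eq_count_dvd[OF assms(1,6-8)])
  fix j assume "j \<noteq> m" "j < m + int t"
  show "count Z j = count Z' j"
  proof (cases "j < m")
    case False
    then have "j \<notin> I"
      using assms(5) \<open>j \<noteq> m\<close> \<open>j < m + int t\<close> by simp
    then have "count Z j = 0" "count Z' j = 0"
      using assms(2,3) by (auto simp: count_eq_zero_iff)
    then show ?thesis
      by simp
  qed (rule assms(4))
qed

lemma sum_powi_eq_size_dvd:
  assumes eq: "sum_powi (of_nat a / of_nat b) Z = sum_powi (of_nat a / of_nat b) Z'"
    and "coprime a b" "0 < a" "0 < b"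
  shows "int a - int b dvd int (size Z) - int (size Z')"
proof -
  obtain L D where window: "set_mset Z \<union> set_mset Z' \<subseteq> {L..L + int D}"
    using finite_int_subset_interval[of "set_mset Z \<union> set_mset Z'"] by auto
  have size: "int (size X) = (\<Sum>i\<le>D. int (count X (L + int i)))" if "set_mset X \<subseteq> {L..L + int D}" for X
    using sum_mset_eq_sum_interval[OF that, of "\<lambda>_. 1 :: int"] by simp
  have "int a - int b dvd (\<Sum>i\<le>D. (int (count Z (L + int i)) - int (count Z' (L + int i))))"
    using window \<open>coprime a b\<close>
    by (intro weighted_sum_zero_diff_dvd sum_powi_eq_imp_weighted_sum[OF eq \<open>0 < a\<close> \<open>0 < b\<close>]) auto
  then show ?thesis
    using window by (simp add: size sum_subtractf)
qed

lemma power_int_less_sum_powi: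
  assumes "0 < a" "a < b" "a \<le> count Z m" "m < k"
  shows "(of_nat a / of_nat b :: rat) powi k < sum_powi (of_nat a / of_nat b) Z"
proof -
  let ?q = "of_nat a / of_nat b :: rat"
  have q: "0 < ?q" "?q < 1" and "1 < (of_nat b :: rat)"
    using assms(1,2) by auto
  have "?q powi k \<le> ?q powi (m + 1)"
    using assms(1,2,4) q by (intro power_int_decreasing) auto
  also have "\<dots> < of_nat b * ?q powi (m + 1)"
    using q \<open>1 < of_nat b\<close> by simp
  also have "\<dots> = of_nat a * ?q powi m"
    using power_int_exchange[of a b 1 m] assms(1,2) by simp
  also have "\<dots> \<le> of_nat (count Z m) * ?q powi m"
    using assms(3) q by (intro mult_right_mono) auto
  also have "\<dots> \<le> sum_powi ?q Z"
    using q(1) by (rule sum_powi_ge_count)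
  finally show ?thesis .
qed

lemma sum_powi_eq_power_int_imp_Min:
  assumes eq: "sum_powi (of_nat a / of_nat b) Z = (of_nat a / of_nat b) powi k"
    and "coprime a b" "2 \<le> a" "a < b"
  shows "Z \<noteq> {#}" "Min (set_mset Z) = k"
proof -
  let ?q = "of_nat a / of_nat b :: rat" and ?m = "Min (set_mset Z)"
  have eq': "sum_powi ?q Z = sum_powi ?q {#k#}"
    using eq by simp
  show "Z \<noteq> {#}"
    using eq assms by auto
  then have "?m \<in># Z"
    by simp
  have "\<not> ?m < k"
  proof
    assume "?m < k"
    then have "int a ^ 1 dvd int (count Z ?m) - int (count {#k#} ?m)"
      using assms by (intro sum_powi_eq_count_dvd[OF eq']) (auto simp: count_eq_0_if_less_Min_mset)
    then have "a \<le> count Z ?m"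
      using \<open>?m < k\<close> \<open>?m \<in># Z\<close> by (simp add: dvd_imp_le)
    then show False
      using power_int_less_sum_powi[of a b Z ?m k] \<open>?m < k\<close> eq assms by simp
  qed
  moreover have "\<not> k < ?m"
  proof
    assume "k < ?m"
    then have "int a ^ 1 dvd int (count Z k) - int (count {#k#} k)"
      using assms by (intro sum_powi_eq_count_dvd[OF eq']) (auto simp: count_eq_0_if_less_Min_mset)
    then have "int a dvd 1"
      using \<open>k < ?m\<close> by (simp add: count_eq_0_if_less_Min_mset)
    then show False
      using \<open>2 \<le> a\<close> by simp
  qed
  ultimately show "?m = k"
    by simp
qed

lemma sum_powi_eq_power_int_imp_singleton_lt:
  assumes eq: "sum_powi (of_nat a / of_nat b) Z = (of_nat a / of_nat b) powi k"
    and "coprime a b" "2 \<le> a" "a < b"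
  shows "Z = {#k#}"
proof -
  have "Z \<noteq> {#}" and Min: "Min (set_mset Z) = k"
    using sum_powi_eq_power_int_imp_Min[OF assms] by blast+
  then have "k \<in># Z"
    unfolding Min[symmetric] by simp
  then obtain R where Z: "Z = add_mset k R"
    by (blast dest: multi_member_split)
  then have "sum_powi (of_nat a / of_nat b) R = 0"
    using eq by simp
  then show ?thesis
    using Z assms by (simp add: sum_powi_eq_0_iff)
qed

lemma sum_powi_eq_power_int_imp_singleton:
  assumes eq: "sum_powi (of_nat a / of_nat b) Z = (of_nat a / of_nat b) powi k"
    and "coprime a b" "2 \<le> a" "2 \<le> b"
  shows "Z = {#k#}"
proof -
  have "a \<noteq> b"
    using assms by auto
  then consider "a < b" | "b < a"
    by linarith
  then show ?thesis
  proof cases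
    case 1
    then show ?thesis
      using sum_powi_eq_power_int_imp_singleton_lt assms by blast
  next
    case 2
    have "sum_powi (of_nat b / of_nat a) (image_mset uminus Z) = (of_nat b / of_nat a) powi (- k)"
      using sum_powi_mirror[of "of_nat a / of_nat b" Z] eq by (simp add: power_int_minus power_int_divide_distrib)
    then have "image_mset uminus Z = {#- k#}"
      using 2 assms by (intro sum_powi_eq_power_int_imp_singleton_lt) (auto simp: coprime_commute)
    moreover have "Z = image_mset uminus (image_mset uminus Z)"
      by (simp add: multiset.map_comp comp_def)
    ultimately show ?thesis
      by simp
  qed
qed

section \<open>Distances of a set of lengths\<close>

definition distances :: "nat set \<Rightarrow> nat set" where
  "distances L = {d. 0 < d \<and> (\<exists>l\<in>L. L \<inter> {l..l + d} = {l, l + d})}"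

lemma distancesI:
  assumes "l \<in> L" "l' \<in> L" "l < l'" "\<And>l''. l'' \<in> L \<Longrightarrow> l'' \<le> l \<or> l' \<le> l''"
  shows "l' - l \<in> distances L"
proof -
  have "L \<inter> {l..l'} = {l, l'}"
  proof (intro equalityI subsetI)
    fix x assume "x \<in> L \<inter> {l..l'}"
    then show "x \<in> {l, l'}"
      using assms(4)[of x] by auto
  qed (use assms(1-3) in auto)
  then have "L \<inter> {l..l + (l' - l)} = {l, l + (l' - l)}"
    using assms(3) by simp
  moreover have "0 < l' - l"
    using assms(3) by simp
  ultimately show ?thesis
    using assms(1) unfolding distances_def by blast
qed

lemma distances_le:
  assumes fill: "\<And>l l'. l \<in> L \<Longrightarrow> l' \<in> L \<Longrightarrow> l < l' \<Longrightarrow> \<exists>l''\<in>L. l < l'' \<and> l'' \<le> l + U"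
    and "d \<in> distances L"
  shows "d \<le> U"
proof (rule ccontr)
  assume "\<not> d \<le> U"
  obtain l where "l \<in> L" and gap: "L \<inter> {l..l + d} = {l, l + d}"
    using \<open>d \<in> distances L\<close> unfolding distances_def by blast
  have "l + d \<in> L \<inter> {l..l + d}"
    unfolding gap by simp
  then obtain l'' where "l'' \<in> L" "l < l''" "l'' \<le> l + U"
    using fill[of l "l + d"] \<open>l \<in> L\<close> \<open>\<not> d \<le> U\<close> by auto
  then have "l'' \<in> L \<inter> {l..l + d}"
    using \<open>\<not> d \<le> U\<close> by simp
  then have "l'' \<in> {l, l + d}"
    unfolding gap .
  then show False
    using \<open>l < l''\<close> \<open>l'' \<le> l + U\<close> \<open>\<not> d \<le> U\<close> by auto
qed

lemma distances_ge_if_dvd: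
  fixes c :: int
  assumes "\<And>l l'. l \<in> L \<Longrightarrow> l' \<in> L \<Longrightarrow> c dvd int l' - int l" and "d \<in> distances L"
  shows "\<bar>c\<bar> \<le> int d"
proof -
  obtain l where "0 < d" "l \<in> L" and gap: "L \<inter> {l..l + d} = {l, l + d}"
    using assms(2) unfolding distances_def by blast
  have "l + d \<in> L \<inter> {l..l + d}"
    unfolding gap by simp
  then have "c dvd int (l + d) - int l"
    using assms(1) \<open>l \<in> L\<close> by blast
  then have "c dvd int d"
    by simp
  then show ?thesis
    using dvd_imp_le_int[of "int d" c] \<open>0 < d\<close> by simp
qed

lemma reduces_to_normal_form:
  fixes f :: "'a \<Rightarrow> nat"
  assumes step: "\<And>z z'. z \<in> F \<Longrightarrow> R z z' \<Longrightarrow> z' \<in> F \<and> f z' < f z"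
  shows "z \<in> F \<Longrightarrow> \<exists>w\<in>F. (\<nexists>w'. R w w') \<and> f w \<le> f z"
proof (induction "f z" arbitrary: z rule: less_induct)
  case less
  show ?case
  proof (cases "\<exists>z'. R z z'")
    case True
    then obtain z' where "R z z'"
      by blast
    then have "z' \<in> F" "f z' < f z"
      using step less.prems by auto
    then obtain w where "w \<in> F" "\<nexists>w'. R w w'" "f w \<le> f z'"
      using less.hyps by blast
    then show ?thesis
      using \<open>f z' < f z\<close> by (intro bexI[of _ w]) auto
  qed (use less.prems in auto)
qed

lemma descent_fills_gaps:
  fixes f :: "'a \<Rightarrow> nat"
  assumes step: "\<And>z z'. z \<in> F \<Longrightarrow> R z z' \<Longrightarrow> z' \<in> F \<and> f z' < f z \<and> f z \<le> f z' + U"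
    and unique: "\<And>z z'. z \<in> F \<Longrightarrow> z' \<in> F \<Longrightarrow> \<nexists>w. R z w \<Longrightarrow> \<nexists>w. R z' w \<Longrightarrow> z = z'"
    and "z \<in> F"
  shows "z' \<in> F \<Longrightarrow> f z < f z' \<Longrightarrow> \<exists>w\<in>F. f z < f w \<and> f w \<le> f z + U"
proof (induction "f z'" arbitrary: z' rule: less_induct)
  case less
  show ?case
  proof (cases "\<exists>w. R z' w")
    case True
    then obtain w where "R z' w"
      by blast
    then have "w \<in> F" "f w < f z'" "f z' \<le> f w + U"
      using step less.prems(1) by auto
    then show ?thesis
      using less.hyps[of w] less.prems by (cases "f z < f w") auto
  next
    case False
    obtain w where "w \<in> F" "\<nexists>w'. R w w'" "f w \<le> f z"
      using reduces_to_normal_form[of F R f z] step \<open>z \<in> F\<close> by blast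
    then have "w = z'"
      using unique less.prems(1) False by blast
    then show ?thesis
      using \<open>f w \<le> f z\<close> less.prems(2) by simp
  qed
qed

definition distance_set :: "rat \<Rightarrow> int set \<Rightarrow> nat set" where
  "distance_set q I = (\<Union>x. distances (size ` power_reps q I x))"

lemma distance_set_mirror: "distance_set (inverse q) (uminus ` I) = distance_set q I"
  by (simp add: distance_set_def size_power_reps_mirror)

lemma distance_set_ge:
  assumes "coprime a b" "0 < a" "0 < b" "d \<in> distance_set (of_nat a / of_nat b) I"
  shows "\<bar>int a - int b\<bar> \<le> int d"
proof -
  obtain x where "d \<in> distances (size ` power_reps (of_nat a / of_nat b) I x)"
    using assms(4) by (auto simp: distance_set_def)
  then show ?thesis
  proof (rule distances_ge_if_dvd[rotated])
    fix l l' assume "l \<in> size ` power_reps (of_nat a / of_nat b) I x" "l' \<in> size ` power_reps (of_nat a / of_nat b) I x"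
    then obtain Z Z' where "Z \<in> power_reps (of_nat a / of_nat b) I x" "Z' \<in> power_reps (of_nat a / of_nat b) I x"
      "l = size Z" "l' = size Z'"
      by blast
    then show "int a - int b dvd int l' - int l"
      using sum_powi_eq_size_dvd[of a b Z' Z] assms(1-3) by (simp add: power_reps_def)
  qed
qed

section \<open>Trades between consecutive exponents\<close>

(* The least element of I above j; an unspecified value if there is none. *)
definition next_in :: "int set \<Rightarrow> int \<Rightarrow> int" where
  "next_in I j = j + int (LEAST n. 0 < n \<and> j + int n \<in> I)"

lemma next_in:
  assumes "k \<in> I" "j < k"
  shows "next_in I j \<in> I" "j < next_in I j" "\<And>i. i \<in> I \<Longrightarrow> j < i \<Longrightarrow> next_in I j \<le> i"
proof -
  have ex: "\<exists>n. 0 < n \<and> j + int n \<in> I"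
    using assms by (intro exI[of _ "nat (k - j)"]) auto
  show "next_in I j \<in> I" "j < next_in I j"
    using LeastI_ex[OF ex] by (auto simp: next_in_def)
  fix i assume "i \<in> I" "j < i"
  then have "(LEAST n. 0 < n \<and> j + int n \<in> I) \<le> nat (i - j)"
    by (intro Least_le) auto
  then show "next_in I j \<le> i"
    using \<open>j < i\<close> by (simp add: next_in_def)
qed

lemma next_in_eqI:
  assumes "j < k" "k \<in> I" "\<And>i. i \<in> I \<Longrightarrow> j < i \<Longrightarrow> k \<le> i"
  shows "next_in I j = k"
proof (rule order.antisym)
  show "next_in I j \<le> k"
    using next_in(3)[OF assms(2,1) assms(2,1)] .
  show "k \<le> next_in I j"
    using assms(3) next_in(1,2)[OF assms(2,1)] by blast
qed

lemma not_in_below_next_in: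
  assumes "k \<in> I" "j < k" "j < i" "i < next_in I j"
  shows "i \<notin> I"
proof
  assume "i \<in> I"
  then have "next_in I j \<le> i"
    using next_in(3)[OF assms(1,2)] assms(3) by blast
  then show False
    using assms(4) by simp
qed

locale power_exchange =
  fixes a b :: nat and I :: "int set" and G :: nat
  assumes b_less_a: "b < a" and b_pos: "0 < b" and coprime: "coprime a b"
    and bounded_gaps: "\<And>j k. j \<in> I \<Longrightarrow> k \<in> I \<Longrightarrow> j < k \<Longrightarrow> \<exists>i\<in>I. j < i \<and> i \<le> j + int G"
begin

abbreviation q :: rat where
  "q \<equiv> of_nat a / of_nat b"

definition gap :: "int \<Rightarrow> nat" where
  "gap j = nat (next_in I j - j)"

definition trade :: "int multiset \<Rightarrow> int multiset \<Rightarrow> bool" where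
  "trade Z Z' \<longleftrightarrow> (\<exists>j\<in>I. (\<exists>k\<in>I. j < k) \<and> a ^ gap j \<le> count Z j \<and>
     Z' = Z - replicate_mset (a ^ gap j) j + replicate_mset (b ^ gap j) (next_in I j))"

lemma a_pos: "0 < a" and one_less_q: "1 < q"
  using b_less_a b_pos by auto

lemma gap:
  assumes "j \<in> I" "k \<in> I" "j < k"
  shows "0 < gap j" "gap j \<le> G" "j + int (gap j) = next_in I j"
proof -
  obtain i where "i \<in> I" "j < i" "i \<le> j + int G"
    using bounded_gaps assms by blast
  then have "next_in I j \<le> j + int G"
    using next_in(3)[OF assms(2,3)] by fastforce
  then show "0 < gap j" "gap j \<le> G" "j + int (gap j) = next_in I j"
    using next_in(2)[OF assms(2,3)] by (auto simp: gap_def)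
qed

lemma gap_exchange:
  assumes "j \<in> I" "k \<in> I" "j < k"
  shows "of_nat (a ^ gap j) * q powi j = of_nat (b ^ gap j) * q powi next_in I j"
  using power_int_exchange[OF a_pos b_pos, of "gap j" j] gap(3)[OF assms] by simp

lemma not_in_gap:
  assumes "j \<in> I" "k \<in> I" "j < k" "j < i" "i < j + int (gap j)"
  shows "i \<notin> I"
  using not_in_below_next_in[OF assms(2,3,4)] gap(3)[OF assms(1-3)] assms(5) by simp

lemma trade_power_reps:
  assumes "Z \<in> power_reps q I x" "trade Z Z'"
  shows "Z' \<in> power_reps q I x" "size Z' < size Z" "size Z \<le> size Z' + (a ^ G - b ^ G)"
proof -
  obtain j k where jk: "j \<in> I" "k \<in> I" "j < k" "a ^ gap j \<le> count Z j"
    and Z': "Z' = Z - replicate_mset (a ^ gap j) j + replicate_mset (b ^ gap j) (next_in I j)"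
    using assms(2) by (auto simp: trade_def)
  note exchange = sum_powi_exchange[OF jk(4) gap_exchange[OF jk(1-3)], folded Z']
  have "set_mset Z' \<subseteq> set_mset Z \<union> {next_in I j}"
    unfolding Z' by (auto dest: in_diffD)
  then show "Z' \<in> power_reps q I x"
    using assms(1) exchange(1) next_in(1)[OF jk(2,3)] by (auto simp: power_reps_def)
  have "b ^ gap j < a ^ gap j"
    using b_less_a gap(1)[OF jk(1-3)] by (simp add: power_strict_mono)
  moreover have "a ^ gap j - b ^ gap j \<le> a ^ G - b ^ G"
    using b_pos b_less_a gap(2)[OF jk(1-3)] by (intro power_diff_mono) auto
  ultimately show "size Z' < size Z" "size Z \<le> size Z' + (a ^ G - b ^ G)"
    using exchange(2) by linarith+
qed

lemma count_less_if_no_trade: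
  assumes "\<nexists>W. trade Z W" "j \<in> I" "k \<in> I" "j < k"
  shows "count Z j < a ^ gap j"
proof (rule ccontr)
  assume "\<not> count Z j < a ^ gap j"
  then have "trade Z (Z - replicate_mset (a ^ gap j) j + replicate_mset (b ^ gap j) (next_in I j))"
    using assms(2-4) unfolding trade_def by auto
  then show False
    using assms(1) by blast
qed

(* At the least exponent m where they differ, both multiplicities are below a ^ t and congruent
  modulo a ^ t, for t the gap after m, or any large t if m is the largest element of I. *)
lemma trade_normal_form_unique:
  assumes Z: "Z \<in> power_reps q I x" "\<nexists>W. trade Z W"
    and Z': "Z' \<in> power_reps q I x" "\<nexists>W. trade Z' W"
  shows "Z = Z'"
proof (rule ccontr)
  assume "Z \<noteq> Z'"
  then obtain m where differ: "count Z m \<noteq> count Z' m"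
    and below: "\<And>j. j < m \<Longrightarrow> count Z j = count Z' j"
    using least_count_difference by blast
  have sets: "set_mset Z \<subseteq> I" "set_mset Z' \<subseteq> I" and eq: "sum_powi q Z = sum_powi q Z'"
    using Z(1) Z'(1) by (auto simp: power_reps_def)
  have "m \<in> I"
  proof (rule ccontr)
    assume "m \<notin> I"
    then have "count Z m = 0" "count Z' m = 0"
      using sets by (auto simp: count_eq_zero_iff)
    then show False
      using differ by simp
  qed
  obtain t where "count Z m < a ^ t" "count Z' m < a ^ t"
    and gap_t: "\<And>j. m < j \<Longrightarrow> j < m + int t \<Longrightarrow> j \<notin> I"
  proof (cases "\<exists>k\<in>I. m < k")
    case True
    then obtain k where "k \<in> I" "m < k"
      by blast
    then show ?thesis
      using count_less_if_no_trade Z(2) Z'(2) not_in_gap \<open>m \<in> I\<close> by (intro that[of "gap m"]) blast+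
  next
    case False
    let ?t = "count Z m + count Z' m"
    have "?t < a ^ ?t"
      using b_less_a b_pos by (intro less_exp[THEN less_le_trans] power_mono) auto
    then show ?thesis
      using False by (intro that[of ?t]) auto
  qed
  moreover have "int a ^ t dvd int (count Z m) - int (count Z' m)"
    using eq sets below gap_t coprime a_pos b_pos by (rule sum_powi_eq_count_dvd_gap)
  ultimately show False
    using differ eq_if_dvd_diff_less[of "a ^ t"] by simp
qed

lemma distance_set_le: "d \<in> distance_set q I \<Longrightarrow> d \<le> a ^ G - b ^ G"
proof -
  assume "d \<in> distance_set q I"
  then obtain x where "d \<in> distances (size ` power_reps q I x)"
    by (auto simp: distance_set_def)
  then show ?thesis
  proof (rule distances_le[rotated])
    fix l l' assume "l \<in> size ` power_reps q I x" "l' \<in> size ` power_reps q I x" "l < l'"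
    then obtain Z Z' where "Z \<in> power_reps q I x" "Z' \<in> power_reps q I x" "size Z = l" "size Z' = l'"
      by blast
    then show "\<exists>l''\<in>size ` power_reps q I x. l < l'' \<and> l'' \<le> l + (a ^ G - b ^ G)"
      using descent_fills_gaps[of "power_reps q I x" trade size "a ^ G - b ^ G" Z Z']
        trade_power_reps trade_normal_form_unique \<open>l < l'\<close> by blast
  qed
qed

lemma dvd_count_least_exponent:
  assumes "i \<in> I" "k \<in> I" "i < k"
    and Z: "Z \<in> power_reps q I (of_nat (a ^ gap i) * q powi i)"
    and m: "m \<in># Z" "m < next_in I i" "\<And>j. j < m \<Longrightarrow> count Z j = 0"
  shows "m \<le> i" "int a ^ gap m dvd int (count Z m) - int (count (replicate_mset (a ^ gap i) i) m)"
proof -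
  let ?R = "replicate_mset (a ^ gap i) i"
  have ZI: "set_mset Z \<subseteq> I" and eq: "sum_powi q Z = sum_powi q ?R"
    using Z by (auto simp: power_reps_def)
  then have "m \<in> I"
    using m(1) by auto
  then show "m \<le> i"
    using not_in_below_next_in[OF assms(2,3)] m(2) by force
  show "int a ^ gap m dvd int (count Z m) - int (count ?R m)"
  proof (rule sum_powi_eq_count_dvd_gap[OF eq ZI _ _ _ coprime a_pos b_pos])
    show "set_mset ?R \<subseteq> I" "\<And>j. j < m \<Longrightarrow> count Z j = count ?R j"
      using assms(1) m(3) \<open>m \<le> i\<close> by auto
    show "\<And>j. m < j \<Longrightarrow> j < m + int (gap m) \<Longrightarrow> j \<notin> I"
      using not_in_gap[OF \<open>m \<in> I\<close> assms(2)] \<open>m \<le> i\<close> assms(3) by simp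
  qed
qed

lemma count_ge_or_trade_below_next:
  assumes "i \<in> I" "k \<in> I" "i < k"
    and Z: "Z \<in> power_reps q I (of_nat (a ^ gap i) * q powi i)" "\<exists>j\<in>#Z. j < next_in I i"
  shows "a ^ gap i \<le> count Z i \<or> (\<exists>Z'. trade Z Z' \<and> (\<exists>j\<in>#Z'. j < next_in I i))"
proof -
  define m where "m = Min (set_mset Z)"
  have "Z \<noteq> {#}"
    using Z(2) by auto
  then have "m \<in># Z" "m \<in> I"
    using Z(1) by (auto simp: m_def power_reps_def)
  have "m < next_in I i"
    using Z(2) by (auto simp: m_def dest: Min_le[rotated])
  have "\<And>j. j < m \<Longrightarrow> count Z j = 0"
    unfolding m_def by (rule count_eq_0_if_less_Min_mset)
  note least = dvd_count_least_exponent[OF assms(1-4) \<open>m \<in># Z\<close> \<open>m < next_in I i\<close> this]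
  have "m \<le> i"
    by (rule least(1))
  note dvd = least(2)
  show ?thesis
  proof (cases "m = i")
    case True
    then have "int (a ^ gap i) dvd int (count Z i) - int (a ^ gap i) + int (a ^ gap i)"
      using dvd by (intro dvd_add) simp_all
    then have "a ^ gap i dvd count Z i"
      by (simp only: diff_add_cancel of_nat_dvd_iff)
    then have "a ^ gap i \<le> count Z i"
      using \<open>m \<in># Z\<close> True by (intro dvd_imp_le) auto
    then show ?thesis ..
  next
    case False
    then have "a ^ gap m dvd count Z m"
      using \<open>m \<le> i\<close> dvd by (simp flip: of_nat_power)
    then have "a ^ gap m \<le> count Z m"
      using \<open>m \<in># Z\<close> by (intro dvd_imp_le) auto
    then have "trade Z (Z - replicate_mset (a ^ gap m) m + replicate_mset (b ^ gap m) (next_in I m))"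
      using \<open>m \<in> I\<close> \<open>m \<le> i\<close> False assms(1) unfolding trade_def
      by (intro bexI[of _ m] conjI bexI[of _ i]) auto
    moreover have "next_in I m < next_in I i"
      using next_in(3)[OF assms(1), of m i] next_in(2)[OF assms(2,3)] \<open>m \<le> i\<close> False assms(1) by fastforce
    ultimately show ?thesis
      using b_pos by (intro disjI2 exI conjI bexI[of _ "next_in I m"]) auto
  qed
qed

lemma size_ge_if_below_next:
  assumes "i \<in> I" "k \<in> I" "i < k"
  shows "Z \<in> power_reps q I (of_nat (a ^ gap i) * q powi i) \<Longrightarrow> \<exists>j\<in>#Z. j < next_in I i \<Longrightarrow>
    a ^ gap i \<le> size Z"
proof (induction "size Z" arbitrary: Z rule: less_induct)
  case less
  from count_ge_or_trade_below_next[OF assms less.prems] show ?case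
  proof
    assume "a ^ gap i \<le> count Z i"
    then show ?thesis
      using count_le_size[of Z i] by linarith
  next
    assume "\<exists>Z'. trade Z Z' \<and> (\<exists>j\<in>#Z'. j < next_in I i)"
    then obtain Z' where "trade Z Z'" "\<exists>j\<in>#Z'. j < next_in I i"
      by blast
    then show ?thesis
      using trade_power_reps[OF less.prems(1)] less.hyps by fastforce
  qed
qed

(* The witness is a ^ g * q powi i, with g the gap after i: it has representations of lengths
  a ^ g and b ^ g, and none strictly in between. *)
lemma power_diff_gap_in_distance_set:
  assumes "i \<in> I" "k \<in> I" "i < k"
  shows "a ^ gap i - b ^ gap i \<in> distance_set q I"
proof -
  let ?x = "of_nat (a ^ gap i) * q powi i" and ?s = "next_in I i"
  let ?Za = "replicate_mset (a ^ gap i) i" and ?Zb = "replicate_mset (b ^ gap i) ?s"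
  have "?Za \<in> power_reps q I ?x"
    using assms(1) by (simp add: power_reps_def)
  moreover have "?Zb \<in> power_reps q I ?x"
    using next_in(1)[OF assms(2,3)] gap_exchange[OF assms] by (simp add: power_reps_def)
  moreover have "b ^ gap i < a ^ gap i"
    using b_less_a gap(1)[OF assms] by (simp add: power_strict_mono)
  moreover have "size Z \<le> b ^ gap i \<or> a ^ gap i \<le> size Z" if "Z \<in> power_reps q I ?x" for Z
  proof (cases "\<exists>j\<in>#Z. j < ?s")
    case True
    then show ?thesis
      using size_ge_if_below_next[OF assms that] by simp
  next
    case False
    then have "of_nat (size Z) * q powi ?s \<le> sum_powi q Z"
      using one_less_q by (intro sum_powi_ge_size power_int_increasing) auto
    also have "\<dots> = of_nat (b ^ gap i) * q powi ?s"
      using that gap_exchange[OF assms] by (simp add: power_reps_def)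
    finally show ?thesis
      using one_less_q by (simp del: of_nat_power)
  qed
  ultimately have "a ^ gap i - b ^ gap i \<in> distances (size ` power_reps q I ?x)"
    using distancesI[of "b ^ gap i" "size ` power_reps q I ?x" "a ^ gap i"] by force
  then show ?thesis
    by (auto simp: distance_set_def)
qed

end

section \<open>Numerical monoids\<close>

lemma numerical_monoid_infinite:
  assumes "numerical_monoid N"
  shows "infinite N"
proof
  assume "finite N"
  moreover have "finite (UNIV - N)"
    using assms by (simp add: numerical_monoid_def)
  ultimately have "finite (N \<union> (UNIV - N))"
    by blast
  then show False
    by simp
qed

lemma
  assumes "numerical_monoid N"
  shows nm_elem_in: "nm_elem N n \<in> N"
    and nm_elem_0: "nm_elem N 0 = 0"
    and nm_elem_less_Suc: "nm_elem N n < nm_elem N (Suc n)"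
    and nm_elem_Suc_le: "k \<in> N \<Longrightarrow> nm_elem N n < k \<Longrightarrow> nm_elem N (Suc n) \<le> k"
    and nm_elem_surj: "k \<in> N \<Longrightarrow> \<exists>n. nm_elem N n = k"
proof -
  have inf: "infinite N"
    using assms by (rule numerical_monoid_infinite)
  have "0 \<in> N"
    using assms by (simp add: numerical_monoid_def)
  show "nm_elem N n \<in> N"
    unfolding nm_elem_def using inf by (rule enumerate_in_set)
  show "nm_elem N 0 = 0"
    unfolding nm_elem_def enumerate_0 using \<open>0 \<in> N\<close> by (rule Least_eq_0)
  show "nm_elem N n < nm_elem N (Suc n)"
    unfolding nm_elem_def using inf by (rule enumerate_step)
  show "k \<in> N \<Longrightarrow> \<exists>n. nm_elem N n = k"
    unfolding nm_elem_def using inf by (rule enumerate_Ex)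
  show "k \<in> N \<Longrightarrow> nm_elem N n < k \<Longrightarrow> nm_elem N (Suc n) \<le> k"
    unfolding nm_elem_def enumerate_Suc''[OF inf] by (rule Least_le) simp
qed

lemma
  assumes "numerical_monoid N"
  shows nm_gap_0_pos: "0 < nm_gap N 0"
    and add_nm_gap_0: "k \<in> N \<Longrightarrow> k + nm_gap N 0 \<in> N"
  using assms nm_elem_less_Suc[OF assms, of 0] nm_elem_in[OF assms, of 1]
  by (auto simp: nm_gap_def nm_elem_0 numerical_monoid_def)

lemma nm_gap_le_nm_gap_0:
  assumes "numerical_monoid N"
  shows "nm_elem N (Suc n) \<le> nm_elem N n + nm_gap N 0"
  using nm_elem_Suc_le[OF assms add_nm_gap_0[OF assms nm_elem_in[OF assms]]] nm_gap_0_pos[OF assms]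
  by simp

lemma next_in_nm_elem:
  assumes "numerical_monoid N"
  shows "next_in (int ` N) (int (nm_elem N n)) = int (nm_elem N (Suc n))"
  using assms by (intro next_in_eqI) (auto simp: nm_elem_in nm_elem_less_Suc nm_elem_Suc_le)

lemma next_in_neg_nm_elem:
  assumes "numerical_monoid N"
  shows "next_in (uminus ` int ` N) (- int (nm_elem N (Suc n))) = - int (nm_elem N n)"
proof (rule next_in_eqI)
  fix i assume "i \<in> uminus ` int ` N" "- int (nm_elem N (Suc n)) < i"
  then obtain k where "k \<in> N" "i = - int k" "k < nm_elem N (Suc n)"
    by auto
  then show "- int (nm_elem N n) \<le> i"
    using nm_elem_Suc_le[OF assms \<open>k \<in> N\<close>, of n] by (cases "nm_elem N n < k") auto
qed (use assms in \<open>auto simp: nm_elem_in nm_elem_less_Suc\<close>)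

lemma power_exchange_numerical_monoid:
  assumes "numerical_monoid N" "b < a" "0 < b" "coprime a b"
  shows "power_exchange a b (int ` N) (nm_gap N 0)"
proof
  fix j k assume "j \<in> int ` N" "k \<in> int ` N" "j < k"
  then obtain n where "n \<in> N" "j = int n"
    by blast
  then show "\<exists>i\<in>int ` N. j < i \<and> i \<le> j + int (nm_gap N 0)"
    using add_nm_gap_0[OF assms(1)] nm_gap_0_pos[OF assms(1)]
    by (intro bexI[of _ "int (n + nm_gap N 0)"] imageI) auto
qed (use assms in auto)

lemma power_exchange_neg_numerical_monoid:
  assumes "numerical_monoid N" "b < a" "0 < b" "coprime a b"
  shows "power_exchange a b (uminus ` int ` N) (nm_gap N 0)"
proof
  fix j k assume "j \<in> uminus ` int ` N" "k \<in> uminus ` int ` N" "j < k"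
  then obtain n n' where "n \<in> N" "j = - int n" "n' \<in> N" "n' < n"
    by auto
  then obtain l where l: "nm_elem N l = n"
    using nm_elem_surj[OF assms(1)] by blast
  moreover have "l \<noteq> 0"
  proof
    assume "l = 0"
    then show False
      using l \<open>n' < n\<close> nm_elem_0[OF assms(1)] by simp
  qed
  ultimately obtain m where "nm_elem N (Suc m) = n"
    using not0_implies_Suc by blast
  then show "\<exists>i\<in>uminus ` int ` N. j < i \<and> i \<le> j + int (nm_gap N 0)"
    using \<open>j = - int n\<close> nm_elem_in[OF assms(1), of m] nm_elem_less_Suc[OF assms(1), of m]
      nm_gap_le_nm_gap_0[OF assms(1), of m] by (intro bexI[of _ "- int (nm_elem N m)"]) auto
qed (use assms in auto)

lemma distance_set_numerical_monoid_gt: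
  assumes "numerical_monoid N" "coprime a b" "b < a" "0 < b"
  shows "a ^ nm_gap N n - b ^ nm_gap N n \<in> distance_set (of_nat a / of_nat b) (int ` N)"
    and "d \<in> distance_set (of_nat a / of_nat b) (int ` N) \<Longrightarrow> d \<le> a ^ nm_gap N 0 - b ^ nm_gap N 0"
proof -
  interpret power_exchange a b "int ` N" "nm_gap N 0"
    using assms by (intro power_exchange_numerical_monoid)
  have "gap (int (nm_elem N n)) = nm_gap N n"
    using next_in_nm_elem[OF assms(1)] by (simp add: gap_def nm_gap_def)
  then show "a ^ nm_gap N n - b ^ nm_gap N n \<in> distance_set (of_nat a / of_nat b) (int ` N)"
    using power_diff_gap_in_distance_set[of "int (nm_elem N n)" "int (nm_elem N (Suc n))"]
      nm_elem_in[OF assms(1)] nm_elem_less_Suc[OF assms(1)] by simp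
  show "d \<in> distance_set (of_nat a / of_nat b) (int ` N) \<Longrightarrow> d \<le> a ^ nm_gap N 0 - b ^ nm_gap N 0"
    by (rule distance_set_le)
qed

lemma distance_set_numerical_monoid_lt:
  assumes "numerical_monoid N" "coprime a b" "a < b" "0 < a"
  shows "b ^ nm_gap N n - a ^ nm_gap N n \<in> distance_set (of_nat a / of_nat b) (int ` N)"
    and "d \<in> distance_set (of_nat a / of_nat b) (int ` N) \<Longrightarrow> d \<le> b ^ nm_gap N 0 - a ^ nm_gap N 0"
proof -
  interpret power_exchange b a "uminus ` int ` N" "nm_gap N 0"
    using assms by (intro power_exchange_neg_numerical_monoid) (auto simp: coprime_commute)
  have mirror: "distance_set (of_nat b / of_nat a) (uminus ` int ` N) = distance_set (of_nat a / of_nat b) (int ` N)"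
    using distance_set_mirror[of "of_nat a / of_nat b" "int ` N"] by simp
  have "gap (- int (nm_elem N (Suc n))) = nm_gap N n"
    using next_in_neg_nm_elem[OF assms(1)] by (simp add: gap_def nm_gap_def)
  then show "b ^ nm_gap N n - a ^ nm_gap N n \<in> distance_set (of_nat a / of_nat b) (int ` N)"
    using power_diff_gap_in_distance_set[of "- int (nm_elem N (Suc n))" "- int (nm_elem N n)"]
      nm_elem_in[OF assms(1)] nm_elem_less_Suc[OF assms(1)] mirror by simp
  show "d \<in> distance_set (of_nat a / of_nat b) (int ` N) \<Longrightarrow> d \<le> b ^ nm_gap N 0 - a ^ nm_gap N 0"
    using distance_set_le mirror by simp
qed

lemma abs_int_power_diff:
  "\<bar>int a ^ g - int b ^ g\<bar> = int (if b \<le> a then a ^ g - b ^ g else b ^ g - a ^ g)"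
  by (simp add: of_nat_diff power_mono)

lemma distance_set_numerical_monoid:
  assumes "numerical_monoid N" "coprime a b" "2 \<le> a" "2 \<le> b"
  shows "\<bar>int a ^ nm_gap N n - int b ^ nm_gap N n\<bar> \<in> int ` distance_set (of_nat a / of_nat b) (int ` N)"
    and "d \<in> distance_set (of_nat a / of_nat b) (int ` N) \<Longrightarrow> int d \<le> \<bar>int a ^ nm_gap N 0 - int b ^ nm_gap N 0\<bar>"
proof -
  have "a \<noteq> b"
    using assms(2-4) by auto
  then show "\<bar>int a ^ nm_gap N n - int b ^ nm_gap N n\<bar> \<in> int ` distance_set (of_nat a / of_nat b) (int ` N)"
    and "d \<in> distance_set (of_nat a / of_nat b) (int ` N) \<Longrightarrow> int d \<le> \<bar>int a ^ nm_gap N 0 - int b ^ nm_gap N 0\<bar>"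
    using distance_set_numerical_monoid_gt[OF assms(1,2)] distance_set_numerical_monoid_lt[OF assms(1,2)] assms(3,4)
    by (auto simp: abs_int_power_diff not_le)
qed

section \<open>Exponential Puiseux semirings\<close>

lemma exp_puiseuxE:
  assumes "x \<in> exp_puiseux r N"
  obtains Z where "set_mset Z \<subseteq> int ` N" "sum_powi r Z = x"
proof -
  from assms have "\<exists>Z. set_mset Z \<subseteq> int ` N \<and> sum_powi r Z = x"
    unfolding exp_puiseux_def
  proof (induction rule: gen_monoid.induct)
    case zero
    show ?case
      by (intro exI[of _ "{#}"]) simp
  next
    case (add y x)
    then obtain k Z where "k \<in> N" "y = r ^ k" "set_mset Z \<subseteq> int ` N" "sum_powi r Z = x"
      by blast
    then show ?case
      by (intro exI[of _ "add_mset (int k) Z"]) auto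
  qed
  then show ?thesis
    using that by blast
qed

lemma sum_powi_in_exp_puiseux: "set_mset Z \<subseteq> int ` N \<Longrightarrow> sum_powi r Z \<in> exp_puiseux r N"
proof (induction Z)
  case empty
  then show ?case
    by (simp add: exp_puiseux_def gen_monoid.zero)
next
  case (add k Z)
  then obtain n where "n \<in> N" "k = int n"
    by auto
  then show ?case
    using add by (auto simp: exp_puiseux_def intro!: gen_monoid.add)
qed

lemma atoms_exp_puiseux_subset:
  assumes "0 < r"
  shows "atoms (exp_puiseux r N) \<subseteq> (\<lambda>k. r powi k) ` int ` N"
proof
  fix y assume "y \<in> atoms (exp_puiseux r N)"
  then have "y \<in> exp_puiseux r N" "y \<noteq> 0"
    and irreducible: "\<And>u v. u \<in> exp_puiseux r N \<Longrightarrow> v \<in> exp_puiseux r N \<Longrightarrow> y = u + v \<Longrightarrow> u = 0 \<or> v = 0"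
    by (auto simp: atoms_def)
  then obtain Z where Z: "set_mset Z \<subseteq> int ` N" "sum_powi r Z = y"
    by (auto elim: exp_puiseuxE)
  then obtain k R where "Z = add_mset k R"
    using \<open>y \<noteq> 0\<close> by (cases Z) auto
  then have "k \<in> int ` N" "set_mset R \<subseteq> int ` N" "y = r powi k + sum_powi r R"
    using Z by auto
  moreover have "sum_powi r R = 0"
    using irreducible[of "r powi k" "sum_powi r R"] sum_powi_in_exp_puiseux[of "{#k#}" N r]
      sum_powi_in_exp_puiseux[of R N r] calculation assms by simp
  ultimately show "y \<in> (\<lambda>k. r powi k) ` int ` N"
    by simp
qed

lemma atoms_exp_puiseux:
  assumes "coprime a b" "2 \<le> a" "2 \<le> b"
  shows "atoms (exp_puiseux (of_nat a / of_nat b) N) = (\<lambda>k. (of_nat a / of_nat b) powi k) ` int ` N"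
proof
  let ?r = "of_nat a / of_nat b :: rat"
  show "atoms (exp_puiseux ?r N) \<subseteq> (\<lambda>k. ?r powi k) ` int ` N"
    using assms by (intro atoms_exp_puiseux_subset) simp
  show "(\<lambda>k. ?r powi k) ` int ` N \<subseteq> atoms (exp_puiseux ?r N)"
  proof (intro image_subsetI)
    fix k assume "k \<in> int ` N"
    have "u = 0 \<or> v = 0"
      if u: "u \<in> exp_puiseux ?r N" and v: "v \<in> exp_puiseux ?r N" and sum: "?r powi k = u + v" for u v
    proof -
      obtain U V where "set_mset U \<subseteq> int ` N" "sum_powi ?r U = u" "set_mset V \<subseteq> int ` N" "sum_powi ?r V = v"
        using u v by (auto elim!: exp_puiseuxE)
      moreover from this have "sum_powi ?r (U + V) = ?r powi k"
        using sum by simp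
      then have "U + V = {#k#}"
        using assms by (rule sum_powi_eq_power_int_imp_singleton)
      ultimately show ?thesis
        by (auto simp: union_is_single)
    qed
    moreover have "?r powi k \<in> exp_puiseux ?r N"
      using sum_powi_in_exp_puiseux[of "{#k#}" N ?r] \<open>k \<in> int ` N\<close> by simp
    ultimately show "?r powi k \<in> atoms (exp_puiseux ?r N)"
      using assms by (auto simp: atoms_def)
  qed
qed

lemma lengths_exp_puiseux:
  assumes atoms: "atoms (exp_puiseux r N) = (\<lambda>k. r powi k) ` int ` N"
  shows "lengths (exp_puiseux r N) x = size ` power_reps r (int ` N) x"
  unfolding lengths_def
proof (intro equalityI image_subsetI)
  let ?f = "\<lambda>k. r powi k"
  fix z assume "z \<in> factorizations (exp_puiseux r N) x"
  then have z: "set_mset z \<subseteq> ?f ` int ` N" "sum_mset z = x"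
    using atoms by (auto simp: factorizations_def)
  define Z where "Z = image_mset (inv_into (int ` N) ?f) z"
  have "image_mset ?f Z = image_mset (\<lambda>y. y) z"
    unfolding Z_def multiset.map_comp using z(1) by (intro image_mset_cong) (auto intro: f_inv_into_f)
  then have "image_mset ?f Z = z"
    by simp
  moreover have "set_mset Z \<subseteq> int ` N"
  proof
    fix k assume "k \<in># Z"
    then obtain y where "y \<in># z" "k = inv_into (int ` N) ?f y"
      by (auto simp: Z_def)
    then show "k \<in> int ` N"
      using z(1) by (auto intro!: inv_into_into)
  qed
  ultimately have "Z \<in> power_reps r (int ` N) x"
    using z(2) by (simp add: power_reps_def sum_powi_def)
  moreover have "size z = size Z"
    by (simp add: Z_def)
  ultimately show "size z \<in> size ` power_reps r (int ` N) x"
    by blast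
next
  fix Z assume "Z \<in> power_reps r (int ` N) x"
  then have "image_mset (\<lambda>k. r powi k) Z \<in> factorizations (exp_puiseux r N) x"
    using atoms by (auto simp: power_reps_def sum_powi_def factorizations_def)
  then show "size Z \<in> size ` factorizations (exp_puiseux r N) x"
    by (rule rev_image_eqI) simp
qed

lemma delta_set_exp_puiseux:
  assumes "coprime a b" "2 \<le> a" "2 \<le> b"
  shows "delta_set (exp_puiseux (of_nat a / of_nat b) N) = distance_set (of_nat a / of_nat b) (int ` N)"
proof -
  let ?r = "of_nat a / of_nat b :: rat"
  have "delta_elem (exp_puiseux ?r N) x = distances (size ` power_reps ?r (int ` N) x)" for x
    by (simp add: delta_elem_def distances_def lengths_exp_puiseux[OF atoms_exp_puiseux[OF assms]])
  moreover have "distances (size ` power_reps ?r (int ` N) x) = {}" if "x \<notin> exp_puiseux ?r N" for x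
  proof -
    have "power_reps ?r (int ` N) x = {}"
      using that sum_powi_in_exp_puiseux by (auto simp: power_reps_def)
    then show ?thesis
      by (simp add: distances_def)
  qed
  then have "distance_set ?r (int ` N) = (\<Union>x\<in>exp_puiseux ?r N. distances (size ` power_reps ?r (int ` N) x))"
    unfolding distance_set_def by blast
  ultimately show ?thesis
    by (simp add: delta_set_def)
qed

lemma unit_fraction_power_not_atom:
  assumes "numerical_monoid N" "2 \<le> b" "k \<in> int ` N"
  shows "(1 / of_nat b) powi k \<notin> atoms (exp_puiseux (1 / of_nat b) N)"
proof
  let ?r = "1 / of_nat b :: rat" and ?M = "exp_puiseux (1 / of_nat b) N" and ?c = "nm_gap N 0"
  assume atom: "?r powi k \<in> atoms ?M"
  let ?k' = "k + int ?c"
  obtain n where "n \<in> N" "k = int n"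
    using assms(3) by blast
  have "int (n + ?c) \<in> int ` N"
    using add_nm_gap_0[OF assms(1) \<open>n \<in> N\<close>] by (rule imageI)
  then have "?k' \<in> int ` N"
    using \<open>k = int n\<close> by simp
  have "?r powi k = of_nat (b ^ ?c) * ?r powi ?k'"
    using power_int_exchange[of 1 b ?c k] assms(2) by simp
  also have "\<dots> = ?r powi ?k' + of_nat (b ^ ?c - 1) * ?r powi ?k'"
    using assms(2) by (simp add: of_nat_diff algebra_simps)
  finally have split: "?r powi k = sum_powi ?r {#?k'#} + sum_powi ?r (replicate_mset (b ^ ?c - 1) ?k')"
    by simp
  have "1 < b ^ ?c"
    using assms(2) nm_gap_0_pos[OF assms(1)] by (intro one_less_power) auto
  then have "replicate_mset (b ^ ?c - 1) ?k' \<noteq> {#}"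
    by simp
  moreover have "0 < ?r"
    using assms(2) by simp
  ultimately have "sum_powi ?r {#?k'#} \<noteq> 0" "sum_powi ?r (replicate_mset (b ^ ?c - 1) ?k') \<noteq> 0"
    by (simp_all only: sum_powi_eq_0_iff) simp_all
  moreover have "sum_powi ?r {#?k'#} \<in> ?M" "sum_powi ?r (replicate_mset (b ^ ?c - 1) ?k') \<in> ?M"
    by (rule sum_powi_in_exp_puiseux; use \<open>?k' \<in> int ` N\<close> in simp)+
  ultimately show False
    using atom split unfolding atoms_def by blast
qed

lemma exp_puiseux_unit_fraction_not_atomic:
  assumes "numerical_monoid N" "2 \<le> b"
  shows "\<not> atomic_monoid (exp_puiseux (1 / of_nat b) N)"
proof -
  let ?r = "1 / of_nat b :: rat" and ?M = "exp_puiseux (1 / of_nat b) N"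
  have "atoms ?M = {}"
    using atoms_exp_puiseux_subset[of ?r N] unit_fraction_power_not_atom[OF assms] assms(2) by force
  have "1 \<in> ?M"
    using sum_powi_in_exp_puiseux[of "{#0#}" N ?r] assms(1) by (simp add: numerical_monoid_def)
  moreover have "factorizations ?M 1 = {}"
    using \<open>atoms ?M = {}\<close> by (auto simp: factorizations_def)
  ultimately show ?thesis
    unfolding atomic_monoid_def by (intro notI) (metis zero_neq_one)
qed

lemma positive_rat_nat_fraction:
  assumes "0 < r" "r \<notin> \<nat>"
  obtains a b :: nat
  where "r = of_nat a / of_nat b" "rnum r = int a" "rden r = int b" "coprime a b" "0 < a" "2 \<le> b"
proof -
  obtain p q where pq: "quotient_of r = (p, q)"
    by fastforce
  have "0 < q" "coprime p q" "r = of_int p / of_int q"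
    using quotient_of_denom_pos[OF pq] quotient_of_coprime[OF pq] quotient_of_div[OF pq] by auto
  then have "0 < p"
    using assms(1) by (auto simp: zero_less_divide_iff)
  have "q \<noteq> 1"
  proof
    assume "q = 1"
    then have "r = of_nat (nat p)"
      using \<open>r = of_int p / of_int q\<close> \<open>0 < p\<close> by simp
    then show False
      using assms(2) by simp
  qed
  show ?thesis
  proof (rule that[of "nat p" "nat q"])
    show "r = of_nat (nat p) / of_nat (nat q)"
      using \<open>r = of_int p / of_int q\<close> \<open>0 < p\<close> \<open>0 < q\<close> by simp
    show "rnum r = int (nat p)" "rden r = int (nat q)"
      using pq \<open>0 < p\<close> \<open>0 < q\<close> by (simp_all add: rnum_def rden_def)
    show "coprime (nat p) (nat q)"
      using \<open>coprime p q\<close> \<open>0 < p\<close> \<open>0 < q\<close> by (simp add: coprime_int_iff[symmetric])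
  qed (use \<open>0 < p\<close> \<open>0 < q\<close> \<open>q \<noteq> 1\<close> in auto)
qed

theorem mainTheorem9:
  fixes r :: rat and N :: "nat set"
  assumes "numerical_monoid N"
    and "r > 0"
    and "r \<notin> \<nat>"
    and "atomic_monoid (exp_puiseux r N)"
  shows "{\<bar>rnum r ^ nm_gap N n - rden r ^ nm_gap N n\<bar> | n. True}
           \<subseteq> int ` delta_set (exp_puiseux r N) \<and>
         int ` delta_set (exp_puiseux r N)
           \<subseteq> {k. \<bar>rnum r - rden r\<bar> \<le> k \<and> k \<le> \<bar>rnum r ^ nm_gap N 0 - rden r ^ nm_gap N 0\<bar>}"
proof -
  obtain a b where r: "r = of_nat a / of_nat b" and num: "rnum r = int a" and den: "rden r = int b"
    and "coprime a b" "0 < a" "2 \<le> b"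
    using positive_rat_nat_fraction assms(2,3) by blast
  have "a \<noteq> 1"
    using exp_puiseux_unit_fraction_not_atomic[OF assms(1) \<open>2 \<le> b\<close>] assms(4) r by auto
  then have "2 \<le> a"
    using \<open>0 < a\<close> by simp
  have delta: "delta_set (exp_puiseux r N) = distance_set (of_nat a / of_nat b) (int ` N)"
    unfolding r using delta_set_exp_puiseux \<open>coprime a b\<close> \<open>2 \<le> a\<close> \<open>2 \<le> b\<close> by blast
  show ?thesis
    unfolding num den delta
    using distance_set_numerical_monoid[OF assms(1) \<open>coprime a b\<close> \<open>2 \<le> a\<close> \<open>2 \<le> b\<close>]
      distance_set_ge[OF \<open>coprime a b\<close> \<open>0 < a\<close>] \<open>2 \<le> b\<close> by auto
qed

end
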